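(* Let $V$ be a linear subspace of $\mathbb{R}^m$ with $\dim V=l$, let $\{v_1,\dots,v_l\}$ be a basis of $V$ extended to a basis $\{v_1,\dots,v_l,\dots,v_m\}$ of $\mathbb{R}^m$. Let $\varphi:V\to\mathbb{R}^m$ be a linear map with $\varphi(x)\ne x$ for every nonzero $x\in V$, whose $m\times l$ matrix with respect to these bases (the $j$-th column giving the coordinates of $\varphi(v_j)$ in the basis $v_1,\dots,v_m$) has the form $\begin{bmatrix} J\\ *\end{bmatrix}$, where $J$ is an $l\times l$ block diagonal matrix all of whose diagonal blocks are of one single type $i_0$, with $i_0\in\{1,5,6\}$. Then there exists a linear subspace $V'\subseteq V$ with $\dim V'\ge l/3$, $\varphi(V')\cap V'=\{0\}$, and $\varphi$ injective on $V'$.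
   Context: For a positive integer $k$ and $a\in\mathbb{R}$, $J_k(a)$ is the $k\times k$ Jordan block with $a$ on the diagonal, $1$ on the superdiagonal, and $0$ elsewhere. For a positive integer $s$ and $a,b\in\mathbb{R}$ with $b\ne0$, $C_s(a,b)$ is the $2s\times 2s$ block upper-triangular matrix whose diagonal $2\times2$ blocks are all $\begin{bmatrix} a&b\\-b&a\end{bmatrix}$, whose $2\times 2$ blocks immediately above the diagonal blocks are the $2\times 2$ identity matrix, and which is zero elsewhere. Block types: Type 1 is $J_1(1)$; Type 5 is $J_k(a)$ with $k>1$ (any $a\in\mathbb{R}$); Type 6 is $C_s(a,b)$ with $b\neq 0$ (any $s\ge1$, $a\in\mathbb{R}$). *)

theory Defs
  imports "HOL-Analysis.Analysis" "Jordan_Normal_Form.Jordan_Normal_Form"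
begin

text \<open>The real 2s x 2s block C_s(a,b): diagonal 2x2 blocks [[a,b],[-b,a]],
  identity 2x2 blocks immediately above the diagonal, zero elsewhere.\<close>
definition C_block :: "nat \<Rightarrow> real \<Rightarrow> real \<Rightarrow> real mat" where
  "C_block s a b = Matrix.mat (2 * s) (2 * s) (\<lambda>(i,j).
     if i div 2 = j div 2 then
       (if i mod 2 = j mod 2 then a else if i mod 2 = 0 then b else - b)
     else if j div 2 = Suc (i div 2) \<and> i mod 2 = j mod 2 then 1 else 0)"

definition is_block_type :: "nat \<Rightarrow> real mat \<Rightarrow> bool" where
  "is_block_type t B =
     (if t = 1 then B = jordan_block 1 1
      else if t = 5 then (\<exists>k a. k > 1 \<and> B = jordan_block k a)
      else if t = 6 then (\<exists>s a b. s \<ge> 1 \<and> b \<noteq> 0 \<and> B = C_block s a b)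
      else False)"

end

theory Submission
  imports Defs
begin

text \<open>
  Call a set S of columns of a matrix pivoted from outside if every j \<in> S owns a row \<tau> j \<notin> S
  whose only nonzero entry among the columns in S lies in column j. A Jordan block of size
  k > 1 has such a set of k div 2 columns (the odd ones, each pivoted by the row above), and
  C_s(a,b) has one of s columns (the even ones, each pivoted by the entry -b in the row below);
  these sets combine along a block diagonal, so J, and with it M, has one of at least l/3
  columns. If x lies in the span V' of the corresponding basis vectors and \<phi> x lies in V'
  again, then the \<tau> j-th coordinate of \<phi> x is 0 but also equals M(\<tau> j, j) times the
  j-th coordinate of x, so x = 0. Hence \<phi>(V') \<inter> V' = 0 and \<phi> is injective on V'.
  For blocks of type 1 the matrix J is the identity, so \<phi> x \<in> V for x \<in> V forces
  \<phi> x = x, hence x = 0, and V' = V works.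
\<close>

definition outside_pivots :: "'a::zero mat \<Rightarrow> nat set \<Rightarrow> (nat \<Rightarrow> nat) \<Rightarrow> bool" where
  "outside_pivots A S \<tau> \<longleftrightarrow> S \<subseteq> {..<dim_col A} \<and>
     (\<forall>j\<in>S. \<tau> j < dim_row A \<and> \<tau> j \<notin> S \<and> (\<forall>j'\<in>S. A $$ (\<tau> j, j') \<noteq> 0 \<longleftrightarrow> j' = j))"

lemma outside_pivots_jordan_block:
  fixes a :: "'a::zero_neq_one"
  shows "outside_pivots (jordan_block k a) ((\<lambda>i. Suc (2 * i)) ` {..<k div 2}) (\<lambda>j. j - 1)"
  by (auto simp: outside_pivots_def Suc_double_not_eq_double double_not_eq_Suc_double)

lemma outside_pivots_C_block:
  assumes "b \<noteq> 0"
  shows "outside_pivots (C_block s a b) ((\<lambda>i. 2 * i) ` {..<s}) Suc"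
  using assms
  by (auto simp: outside_pivots_def C_block_def Suc_double_not_eq_double double_not_eq_Suc_double)

lemma outside_pivots_four_block_mat:
  assumes A: "outside_pivots A S \<tau>" "A \<in> carrier_mat n n" and D: "outside_pivots D T \<sigma>"
  shows "outside_pivots (four_block_mat A (0\<^sub>m n (dim_col D)) (0\<^sub>m (dim_row D) n) D)
    (S \<union> (+) n ` T) (\<lambda>j. if j < n then \<tau> j else n + \<sigma> (j - n))"
    (is "outside_pivots ?F ?S ?\<tau>")
proof -
  have S: "S \<subseteq> {..<n}"
      "\<And>j. j \<in> S \<Longrightarrow> \<tau> j < n \<and> \<tau> j \<notin> S \<and> (\<forall>j'\<in>S. A $$ (\<tau> j, j') \<noteq> 0 \<longleftrightarrow> j' = j)"
    using A by (auto simp: outside_pivots_def)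
  have T: "T \<subseteq> {..<dim_col D}"
      "\<And>t. t \<in> T \<Longrightarrow> \<sigma> t < dim_row D \<and> \<sigma> t \<notin> T \<and> (\<forall>t'\<in>T. D $$ (\<sigma> t, t') \<noteq> 0 \<longleftrightarrow> t' = t)"
    using D by (auto simp: outside_pivots_def)
  have dA: "dim_row A = n" "dim_col A = n"
    using A(2) by auto
  have F_A: "?F $$ (i, j') = A $$ (i, j')" if "i < n" "j' \<in> S" for i j'
    using that S(1) dA by auto
  have F_B: "?F $$ (i, n + t) = 0" if "i < n" "t \<in> T" for i t
    using that T(1) dA by auto
  have F_C: "?F $$ (n + i, j') = 0" if "i < dim_row D" "j' \<in> S" for i j'
    using that S(1) dA by auto
  have F_D: "?F $$ (n + i, n + t) = D $$ (i, t)" if "i < dim_row D" "t \<in> T" for i t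
    using that T(1) dA by auto
  have "?\<tau> j < dim_row ?F \<and> ?\<tau> j \<notin> ?S \<and> (\<forall>j'\<in>?S. ?F $$ (?\<tau> j, j') \<noteq> 0 \<longleftrightarrow> j' = j)"
    if "j \<in> ?S" for j
    using that
  proof
    assume "j \<in> S"
    then have "?\<tau> j = \<tau> j" "\<tau> j < n" "\<tau> j \<notin> S" "\<forall>j'\<in>S. A $$ (\<tau> j, j') \<noteq> 0 \<longleftrightarrow> j' = j"
      using S by auto
    then show ?thesis
      using \<open>j \<in> S\<close> S(1) by (auto simp: F_A F_B dA)
  next
    assume "j \<in> (+) n ` T"
    then obtain t where "t \<in> T" "j = n + t" by blast
    then have "?\<tau> j = n + \<sigma> t" "\<sigma> t < dim_row D" "\<sigma> t \<notin> T"
        "\<forall>t'\<in>T. D $$ (\<sigma> t, t') \<noteq> 0 \<longleftrightarrow> t' = t"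
      using T by auto
    then show ?thesis
      using \<open>t \<in> T\<close> \<open>j = n + t\<close> S(1) by (auto simp: F_C F_D dA)
  qed
  then show ?thesis
    using S(1) T(1) dA by (auto simp: outside_pivots_def)
qed

lemma outside_pivots_diag_block_mat:
  assumes "\<And>B. B \<in> set Bs \<Longrightarrow> dim_row B = dim_col B"
    and "\<And>B. B \<in> set Bs \<Longrightarrow> \<exists>S \<tau>. outside_pivots B S \<tau> \<and> dim_col B \<le> c * card S"
  shows "\<exists>S \<tau>. outside_pivots (diag_block_mat Bs) S \<tau> \<and> dim_col (diag_block_mat Bs) \<le> c * card S"
  using assms
proof (induction Bs)
  case Nil
  show ?case by (intro exI[of _ "{}"]) (simp add: outside_pivots_def)
next
  case (Cons A Bs)
  obtain S \<tau> where A: "outside_pivots A S \<tau>" "dim_col A \<le> c * card S"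
    using Cons.prems(2)[OF list.set_intros(1)] by blast
  have A_square: "A \<in> carrier_mat (dim_col A) (dim_col A)"
    by (rule carrier_matI) (simp_all add: Cons.prems(1))
  have "\<exists>T \<sigma>. outside_pivots (diag_block_mat Bs) T \<sigma> \<and> dim_col (diag_block_mat Bs) \<le> c * card T"
    using Cons.IH Cons.prems by (meson list.set_intros(2))
  then obtain T \<sigma> where
    D: "outside_pivots (diag_block_mat Bs) T \<sigma>" "dim_col (diag_block_mat Bs) \<le> c * card T"
    by blast
  have "S \<subseteq> {..<dim_col A}" "T \<subseteq> {..<dim_col (diag_block_mat Bs)}"
    using A(1) D(1) by (simp_all add: outside_pivots_def)
  then have "card (S \<union> (+) (dim_col A) ` T) = card S + card ((+) (dim_col A) ` T)"
    by (intro card_Un_disjoint) (auto intro: finite_subset[OF _ finite_lessThan])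
  also have "\<dots> = card S + card T"
    by (simp add: card_image)
  finally have "dim_col (diag_block_mat (A # Bs)) \<le> c * card (S \<union> (+) (dim_col A) ` T)"
    using A(2) D(2) by (simp add: Let_def add_mult_distrib2)
  moreover have "outside_pivots (diag_block_mat (A # Bs)) (S \<union> (+) (dim_col A) ` T)
      (\<lambda>j. if j < dim_col A then \<tau> j else dim_col A + \<sigma> (j - dim_col A))"
    using outside_pivots_four_block_mat[OF A(1) A_square D(1)] Cons.prems(1)[of A]
    by (simp add: Let_def)
  ultimately show ?case by blast
qed

lemma outside_pivots_submatrix:
  assumes "outside_pivots A S \<tau>" "dim_row A \<le> dim_row B" "dim_col A \<le> dim_col B"
    and "\<And>i j. i < dim_row A \<Longrightarrow> j < dim_col A \<Longrightarrow> B $$ (i, j) = A $$ (i, j)"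
  shows "outside_pivots B S \<tau>"
proof -
  have "S \<subseteq> {..<dim_col A}" using assms(1) by (simp add: outside_pivots_def)
  then show ?thesis
    using assms unfolding outside_pivots_def by (auto simp: subset_iff)
qed

lemma jordan_block_1_1: "jordan_block 1 1 = 1\<^sub>m 1"
  by (rule eq_matI) auto

lemma diag_block_mat_one_mats:
  assumes "\<And>B. B \<in> set Bs \<Longrightarrow> \<exists>k. B = 1\<^sub>m k"
  shows "\<exists>k. diag_block_mat Bs = (1\<^sub>m k :: 'a::{zero,one} mat)"
  using assms
proof (induction Bs)
  case Nil
  show ?case by (rule exI[of _ 0]) auto
next
  case (Cons A Bs)
  obtain a where A: "A = 1\<^sub>m a" using Cons.prems[OF list.set_intros(1)] by blast
  obtain b where "diag_block_mat Bs = 1\<^sub>m b" using Cons.IH Cons.prems by (meson list.set_intros(2))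
  then have "diag_block_mat (A # Bs) = 1\<^sub>m (a + b)"
    unfolding A by (intro eq_matI) (auto simp: Let_def)
  then show ?case by blast
qed

lemma is_block_type_square: "is_block_type t B \<Longrightarrow> dim_row B = dim_col B"
  by (auto simp: is_block_type_def C_block_def split: if_splits)

lemma is_block_type_1: "is_block_type 1 B \<longleftrightarrow> B = 1\<^sub>m 1"
  unfolding is_block_type_def jordan_block_1_1 by simp

lemma is_block_type_outside_pivots:
  assumes "t \<in> {5, 6}" "is_block_type t B"
  shows "\<exists>S \<tau>. outside_pivots B S \<tau> \<and> dim_col B \<le> 3 * card S"
proof (cases "t = 5")
  case True
  then obtain k a where "k > 1" "B = jordan_block k a"
    using assms(2) by (auto simp: is_block_type_def)
  moreover have "card ((\<lambda>i. Suc (2 * i)) ` {..<k div 2}) = k div 2"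
    by (simp add: card_image inj_on_def)
  ultimately show ?thesis
    using outside_pivots_jordan_block[of k a] by (intro exI) auto
next
  case False
  then obtain s a b where "b \<noteq> 0" "B = C_block s a b"
    using assms by (auto simp: is_block_type_def)
  moreover have "card ((\<lambda>i. 2 * i) ` {..<s}) = s"
    by (simp add: card_image inj_on_def)
  ultimately show ?thesis
    using outside_pivots_C_block[of b s a] by (intro exI) (auto simp: C_block_def)
qed

lemma
  assumes "linear f" "subspace W" "\<And>x. x \<in> W \<Longrightarrow> f x \<in> W \<Longrightarrow> x = 0"
  shows linear_image_inter_eq_zero: "f ` W \<inter> W = {0}"
    and linear_inj_on_if_no_return: "inj_on f W"
proof -
  have "f 0 = 0" "0 \<in> W" using assms(1,2) by (simp_all add: linear_0 subspace_0)
  then show "f ` W \<inter> W = {0}" using assms(3) by force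
  show "inj_on f W"
    using assms \<open>f 0 = 0\<close> \<open>0 \<in> W\<close> by (simp add: linear_inj_on_iff_eq_0)
qed

locale indexed_basis =
  fixes v :: "nat \<Rightarrow> 'a::real_vector" and n :: nat
  assumes independent: "independent (v ` {..<n})"
    and inj: "inj_on v {..<n}"
    and spanning: "span (v ` {..<n}) = UNIV"
begin

definition coord :: "nat \<Rightarrow> 'a \<Rightarrow> real" where
  "coord i x = representation (v ` {..<n}) x (v i)"

lemma linear_coord: "linear (coord i)"
  by (rule linearI)
    (simp_all add: coord_def representation_add representation_scale independent spanning)

lemma coord_sum_basis:
  assumes "S \<subseteq> {..<n}" "i < n"
  shows "coord i (\<Sum>j\<in>S. c j *\<^sub>R v j) = (if i \<in> S then c i else 0)"
proof -
  have "coord i (\<Sum>j\<in>S. c j *\<^sub>R v j) = (\<Sum>j\<in>S. c j * coord i (v j))"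
    by (simp add: linear_sum[OF linear_coord] linear_scale[OF linear_coord])
  also have "\<dots> = (\<Sum>j\<in>S. if j = i then c j else 0)"
  proof (rule sum.cong)
    fix j assume "j \<in> S"
    then have "coord i (v j) = (if j = i then 1 else 0)"
      using assms inj representation_basis[OF independent] by (auto simp: coord_def inj_on_eq_iff)
    then show "c j * coord i (v j) = (if j = i then c j else 0)" by simp
  qed simp
  also have "\<dots> = (if i \<in> S then c i else 0)"
    using assms by (simp add: finite_subset)
  finally show ?thesis .
qed

lemma span_subfamily_eq_sum:
  assumes "S \<subseteq> {..<n}" "x \<in> span (v ` S)"
  shows "x = (\<Sum>j\<in>S. coord j x *\<^sub>R v j)"
proof -
  have "inj_on v S" "independent (v ` S)"
    using inj_on_subset[OF inj assms(1)] independent_mono[OF independent image_mono[OF assms(1)]] .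
  have "x = (\<Sum>b\<in>v ` S. representation (v ` S) x b *\<^sub>R b)"
    using assms by (simp add: sum_representation_eq \<open>independent (v ` S)\<close> finite_subset)
  also have "\<dots> = (\<Sum>j\<in>S. representation (v ` S) x (v j) *\<^sub>R v j)"
    by (simp add: sum.reindex[OF \<open>inj_on v S\<close>])
  also have "\<dots> = (\<Sum>j\<in>S. coord j x *\<^sub>R v j)"
    using assms by (simp add: coord_def representation_extend[OF independent] image_mono)
  finally show ?thesis .
qed

lemma coord_eqI:
  assumes "\<And>i. i < n \<Longrightarrow> coord i x = coord i y"
  shows "x = y"
  using span_subfamily_eq_sum[of "{..<n}" x] span_subfamily_eq_sum[of "{..<n}" y] assms
  by (simp add: spanning)

lemma coord_outside_subfamily:
  assumes "S \<subseteq> {..<n}" "x \<in> span (v ` S)" "i < n" "i \<notin> S"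
  shows "coord i x = 0"
proof -
  have "coord i x = coord i (\<Sum>j\<in>S. coord j x *\<^sub>R v j)"
    using span_subfamily_eq_sum[OF assms(1,2)] by (rule arg_cong)
  also have "\<dots> = 0"
    using coord_sum_basis[OF assms(1,3)] assms(4) by simp
  finally show ?thesis .
qed

lemma dim_span_subfamily:
  assumes "S \<subseteq> {..<n}"
  shows "dim (span (v ` S)) = card S"
proof -
  have "independent (v ` S)"
    using independent_mono[OF independent image_mono[OF assms]] .
  then show ?thesis
    using card_image[OF inj_on_subset[OF inj assms]] by (simp add: dim_eq_card_independent)
qed

end

locale matrix_of_linear_map = indexed_basis v n for v :: "nat \<Rightarrow> 'a::real_vector" and n +
  fixes \<phi> :: "'a \<Rightarrow> 'a" and M :: "real mat" and l :: nat
  assumes linear_\<phi>: "linear \<phi>"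
    and M_carrier: "M \<in> carrier_mat n l"
    and columns: "\<And>j. j < l \<Longrightarrow> \<phi> (v j) = (\<Sum>i<n. M $$ (i, j) *\<^sub>R v i)"
    and l_le_n: "l \<le> n"
begin

lemma coord_image:
  assumes "S \<subseteq> {..<l}" "x \<in> span (v ` S)" "i < n"
  shows "coord i (\<phi> x) = (\<Sum>j\<in>S. coord j x * M $$ (i, j))"
proof -
  have "S \<subseteq> {..<n}" using assms(1) l_le_n by auto
  have "coord i (\<phi> x) = coord i (\<phi> (\<Sum>j\<in>S. coord j x *\<^sub>R v j))"
    using span_subfamily_eq_sum[OF \<open>S \<subseteq> {..<n}\<close> assms(2)] by simp
  also have "\<dots> = (\<Sum>j\<in>S. coord j x * coord i (\<phi> (v j)))"
    by (simp add: linear_sum[OF linear_\<phi>] linear_scale[OF linear_\<phi>]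
        linear_sum[OF linear_coord] linear_scale[OF linear_coord])
  also have "\<dots> = (\<Sum>j\<in>S. coord j x * M $$ (i, j))"
    using assms(1,3) by (intro sum.cong) (auto simp: columns coord_sum_basis)
  finally show ?thesis .
qed

lemma outside_pivots_no_return:
  assumes "outside_pivots M S \<tau>" "x \<in> span (v ` S)" "\<phi> x \<in> span (v ` S)"
  shows "x = 0"
proof -
  have "S \<subseteq> {..<l}" using assms(1) M_carrier by (auto simp: outside_pivots_def)
  then have "S \<subseteq> {..<n}" using l_le_n by auto
  have "coord j x = 0" if "j \<in> S" for j
  proof -
    have pivot: "\<tau> j < n" "\<tau> j \<notin> S" "M $$ (\<tau> j, j) \<noteq> 0"
        "\<And>j'. j' \<in> S \<Longrightarrow> j' \<noteq> j \<Longrightarrow> M $$ (\<tau> j, j') = 0"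
      using assms(1) that M_carrier by (auto simp: outside_pivots_def)
    have "0 = coord (\<tau> j) (\<phi> x)"
      using coord_outside_subfamily[OF \<open>S \<subseteq> {..<n}\<close> assms(3) pivot(1,2)] by simp
    also have "\<dots> = (\<Sum>j'\<in>S. coord j' x * M $$ (\<tau> j, j'))"
      by (rule coord_image[OF \<open>S \<subseteq> {..<l}\<close> assms(2) pivot(1)])
    also have "\<dots> = (\<Sum>j'\<in>S. if j' = j then coord j x * M $$ (\<tau> j, j) else 0)"
      using pivot(4) by (intro sum.cong) auto
    also have "\<dots> = coord j x * M $$ (\<tau> j, j)"
      using that finite_subset[OF \<open>S \<subseteq> {..<l}\<close>] by simp
    finally show ?thesis using pivot(3) by simp
  qed
  then show ?thesis
    using span_subfamily_eq_sum[OF \<open>S \<subseteq> {..<n}\<close> assms(2)] by simp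
qed

lemma identity_submatrix_fixes:
  assumes "S \<subseteq> {..<l}"
    and "\<And>i j. i \<in> S \<Longrightarrow> j \<in> S \<Longrightarrow> M $$ (i, j) = (if i = j then 1 else 0)"
    and "x \<in> span (v ` S)" "\<phi> x \<in> span (v ` S)"
  shows "\<phi> x = x"
proof (rule coord_eqI)
  fix i assume "i < n"
  have "S \<subseteq> {..<n}" using assms(1) l_le_n by auto
  show "coord i (\<phi> x) = coord i x"
  proof (cases "i \<in> S")
    case True
    have "coord i (\<phi> x) = (\<Sum>j\<in>S. coord j x * M $$ (i, j))"
      by (rule coord_image[OF assms(1,3) \<open>i < n\<close>])
    also have "\<dots> = (\<Sum>j\<in>S. if j = i then coord j x else 0)"
      using True assms(2) by (intro sum.cong) auto
    also have "\<dots> = coord i x"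
      using True finite_subset[OF assms(1)] by simp
    finally show ?thesis .
  next
    case False
    then show ?thesis
      using coord_outside_subfamily[OF \<open>S \<subseteq> {..<n}\<close> _ \<open>i < n\<close>] assms(3,4) by simp
  qed
qed

lemma no_return_subfamily_span:
  assumes "S \<subseteq> {..<l}" "\<And>x. x \<in> span (v ` S) \<Longrightarrow> \<phi> x \<in> span (v ` S) \<Longrightarrow> x = 0"
  shows "span (v ` S) \<subseteq> span (v ` {..<l})" "dim (span (v ` S)) = card S"
    and "\<phi> ` span (v ` S) \<inter> span (v ` S) = {0}" "inj_on \<phi> (span (v ` S))"
proof -
  show "span (v ` S) \<subseteq> span (v ` {..<l})"
    using assms(1) by (simp add: span_mono image_mono)
  show "dim (span (v ` S)) = card S"
    using assms(1) l_le_n by (intro dim_span_subfamily) auto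
  show "\<phi> ` span (v ` S) \<inter> span (v ` S) = {0}" "inj_on \<phi> (span (v ` S))"
    using linear_image_inter_eq_zero linear_inj_on_if_no_return linear_\<phi> assms(2) by auto
qed

end

theorem lemma3p3:
  fixes v :: "nat \<Rightarrow> real^'m"
    and l :: nat
    and V :: "(real^'m) set"
    and \<phi> :: "real^'m \<Rightarrow> real^'m"
    and M :: "real mat"
    and Bs :: "real mat list"
    and i0 :: nat
  assumes basis_indep: "independent (v ` {..<CARD('m)})"
    and basis_inj: "inj_on v {..<CARD('m)}"
    and basis_span: "span (v ` {..<CARD('m)}) = UNIV"
    and l_le: "l \<le> CARD('m)"
    and V_def: "V = span (v ` {..<l})"
    and lin: "linear \<phi>"
    and no_fix: "\<And>x. x \<in> V \<Longrightarrow> x \<noteq> 0 \<Longrightarrow> \<phi> x \<noteq> x"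
    and M_dim: "M \<in> carrier_mat CARD('m) l"
    and M_cols: "\<And>j. j < l \<Longrightarrow> \<phi> (v j) = (\<Sum>i<CARD('m). M $$ (i, j) *\<^sub>R v i)"
    and J_dim: "diag_block_mat Bs \<in> carrier_mat l l"
    and M_top: "\<And>i j. i < l \<Longrightarrow> j < l \<Longrightarrow> M $$ (i, j) = diag_block_mat Bs $$ (i, j)"
    and i0: "i0 \<in> {1, 5, 6}"
    and types: "\<And>B. B \<in> set Bs \<Longrightarrow> is_block_type i0 B"
  shows "\<exists>V'. subspace V' \<and> V' \<subseteq> V \<and> real (dim V') \<ge> real l / 3
              \<and> \<phi> ` V' \<inter> V' = {0} \<and> inj_on \<phi> V'"
proof -
  interpret matrix_of_linear_map v "CARD('m)" \<phi> M l
    by (intro matrix_of_linear_map.intro indexed_basis.intro matrix_of_linear_map_axioms.intro assms)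
  let ?J = "diag_block_mat Bs"
  obtain S where S: "S \<subseteq> {..<l}" "real l \<le> 3 * real (card S)"
    and no_return: "\<And>x. x \<in> span (v ` S) \<Longrightarrow> \<phi> x \<in> span (v ` S) \<Longrightarrow> x = 0"
  proof (cases "i0 = 1")
    case True
    then obtain k where "?J = 1\<^sub>m k"
      using diag_block_mat_one_mats[of Bs] types is_block_type_1 by blast
    then have "M $$ (i, j) = (if i = j then 1 else 0)" if "i < l" "j < l" for i j
      using M_top[OF that] that J_dim by auto
    then show thesis
      using identity_submatrix_fixes[of "{..<l}"] no_fix V_def by (intro that[of "{..<l}"]) auto
  next
    case False
    then have "i0 \<in> {5, 6}" using i0 by auto
    then obtain S \<tau> where J_pivots: "outside_pivots ?J S \<tau>" "dim_col ?J \<le> 3 * card S"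
      using outside_pivots_diag_block_mat[of Bs 3] is_block_type_square[OF types]
        is_block_type_outside_pivots[OF _ types] by blast
    then have "S \<subseteq> {..<l}" "outside_pivots M S \<tau>"
      using outside_pivots_submatrix[OF J_pivots(1)] J_dim M_dim M_top l_le
      by (auto simp: outside_pivots_def[of ?J])
    then show thesis
      using J_pivots(2) J_dim outside_pivots_no_return by (intro that[of S]) auto
  qed
  then show ?thesis
    using no_return_subfamily_span[OF S(1) no_return] S(2) V_def
    by (intro exI[of _ "span (v ` S)"]) auto
qed

end
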